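(* Let $\mathcal{E}_1$ be a finite multiset of real numbers, let $\epsilon\in(0,\tfrac14]$, and let $q(\mathcal{E}_1,\epsilon)$ be the $\lceil(1+|\mathcal{E}_1|)(1-\epsilon)\rceil$-th smallest element of $\mathcal{E}_1$. Let $\mathcal{E}_2$ be the multiset obtained from $\mathcal{E}_1$ by adding $t_l\ge 2$ elements that are less than or equal to $q(\mathcal{E}_1,\epsilon)$ and $t_r\ge t_l$ elements that are strictly greater than $q(\mathcal{E}_1,\epsilon)$. Then $q(\mathcal{E}_2,\epsilon)\ge q(\mathcal{E}_1,\epsilon)$, where $q(\mathcal{E}_2,\epsilon)$ is the $\lceil(1+|\mathcal{E}_2|)(1-\epsilon)\rceil$-th smallest element of $\mathcal{E}_2$.
   Context: Order statistics of multisets are counted with multiplicity; if the rank index $\lceil(1+|\mathcal{E}|)(1-\epsilon)\rceil$ exceeds $|\mathcal{E}|$, $q(\mathcal{E},\epsilon)$ is taken to be $+\infty$. *)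

theory Defs
  imports Complex_Main "HOL-Library.Multiset" "HOL-Library.Extended_Real"
begin

text \<open>Ranks below 1 (possible only for eps >= 1) are mapped to -infinity by convention.\<close>
definition quant :: "real multiset \<Rightarrow> real \<Rightarrow> ereal" where
  "quant E eps =
     (let k = \<lceil>(1 + real (size E)) * (1 - eps)\<rceil> in
      if k > int (size E) then PInfty
      else if k < 1 then MInfty
      else ereal (sorted_list_of_multiset E ! (nat k - 1)))"

end

theory Submission
  imports Defs
begin

text \<open>Adding \<open>t\<^sub>l\<close> points at or below \<open>q = q(E\<^sub>1, \<epsilon>)\<close> and at least as many above it raises the
  rank index by at least \<open>t\<^sub>l\<close>, because \<open>(t\<^sub>l + t\<^sub>r)(1 - \<epsilon>) \<ge> 2 t\<^sub>l \<cdot> 1/2\<close>. Meanwhile the number of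
  elements strictly below \<open>q\<close> grows by at most \<open>t\<^sub>l\<close>, so it stays below the new rank, and the
  element of that rank is therefore still at least \<open>q\<close>.\<close>

definition quant_rank :: "real multiset \<Rightarrow> real \<Rightarrow> int" where
  "quant_rank E eps = \<lceil>(1 + real (size E)) * (1 - eps)\<rceil>"

lemma quant_eq_rank:
  "quant E eps =
     (if quant_rank E eps > int (size E) then PInfty
      else if quant_rank E eps < 1 then MInfty
      else ereal (sorted_list_of_multiset E ! (nat (quant_rank E eps) - 1)))"
  unfolding quant_def quant_rank_def Let_def by simp

lemma sorted_nth_ge_iff_length_filter_less:
  fixes xs :: "'a::linorder list"
  assumes "sorted xs" and "i < length xs"
  shows "v \<le> xs ! i \<longleftrightarrow> length (filter (\<lambda>x. x < v) xs) \<le> i"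
  using assms
proof (induction xs arbitrary: i)
  case (Cons a xs)
  show ?case
  proof (cases "a < v")
    case True
    with Cons show ?thesis
      by (cases i) auto
  next
    case False
    with Cons.prems(1) have all_ge: "\<forall>x\<in>set (a # xs). v \<le> x"
      by (auto simp: not_less intro: order_trans)
    then have "v \<le> (a # xs) ! i"
      using Cons.prems(2) nth_mem by blast
    moreover have "filter (\<lambda>x. x < v) (a # xs) = []"
      using all_ge by (simp only: filter_empty_conv not_less)
    ultimately show ?thesis
      by simp
  qed
qed simp

lemma nth_sorted_list_of_multiset_ge_iff:
  fixes M :: "'a::linorder multiset"
  assumes "i < size M"
  shows "v \<le> sorted_list_of_multiset M ! i \<longleftrightarrow> size {#x \<in># M. x < v#} \<le> i"
proof -
  have "size {#x \<in># M. x < v#} = length (filter (\<lambda>x. x < v) (sorted_list_of_multiset M))"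
    by (metis mset_filter mset_sorted_list_of_multiset size_mset)
  moreover have "i < length (sorted_list_of_multiset M)"
    using assms by (metis mset_sorted_list_of_multiset size_mset)
  ultimately show ?thesis
    by (simp add: sorted_nth_ge_iff_length_filter_less)
qed

lemma quant_ge_if_size_less:
  assumes "int (size {#x \<in># E. x < v#}) < quant_rank E eps"
  shows "ereal v \<le> quant E eps"
proof (cases "quant_rank E eps > int (size E)")
  case False
  with assms have "nat (quant_rank E eps) - 1 < size E"
    and "size {#x \<in># E. x < v#} \<le> nat (quant_rank E eps) - 1"
    by linarith+
  with False assms show ?thesis
    by (simp add: quant_eq_rank nth_sorted_list_of_multiset_ge_iff)
qed (simp add: quant_eq_rank)

lemma size_less_if_quant_eq:
  assumes "quant E eps = ereal v"
  shows "int (size {#x \<in># E. x < v#}) < quant_rank E eps"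
proof -
  have in_range: "1 \<le> quant_rank E eps" "quant_rank E eps \<le> int (size E)"
    and "v = sorted_list_of_multiset E ! (nat (quant_rank E eps) - 1)"
    using assms by (auto simp: quant_eq_rank split: if_splits)
  then have "size {#x \<in># E. x < v#} \<le> nat (quant_rank E eps) - 1"
    using nth_sorted_list_of_multiset_ge_iff[of "nat (quant_rank E eps) - 1" E v] by simp
  with in_range show ?thesis
    by linarith
qed

lemma quant_rank_add_ge:
  assumes "eps \<le> 1/2" and "size L \<le> size R"
  shows "quant_rank E eps + int (size L) \<le> quant_rank (E + L + R) eps"
proof -
  have "real (size L) \<le> real (size L + size R) * (1/2)"
    using assms(2) by simp
  also have "\<dots> \<le> real (size L + size R) * (1 - eps)"
    using assms(1) by (intro mult_left_mono) auto
  finally have "\<lceil>(1 + real (size E)) * (1 - eps) + of_int (int (size L))\<rceil>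
      \<le> \<lceil>(1 + real (size (E + L + R))) * (1 - eps)\<rceil>"
    by (intro ceiling_mono) (simp add: algebra_simps)
  then show ?thesis
    unfolding quant_rank_def by (simp only: ceiling_add_of_int)
qed

theorem lemma1:
  fixes E1 L R :: "real multiset" and eps :: real
  assumes "0 < eps" and "eps \<le> 1/4"
    and "size L \<ge> 2" and "size R \<ge> size L"
    and "\<forall>x\<in>#L. ereal x \<le> quant E1 eps"
    and "\<forall>x\<in>#R. ereal x > quant E1 eps"
  shows "quant (E1 + L + R) eps \<ge> quant E1 eps"
proof (cases "quant E1 eps")
  case (real v)
  have R_above: "{#x \<in># R. x < v#} = {#}"
    using assms(6) real by auto
  have "int (size {#x \<in># E1 + L + R. x < v#}) \<le> int (size {#x \<in># E1. x < v#}) + int (size L)"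
    by (simp add: R_above)
  also have "\<dots> < quant_rank E1 eps + int (size L)"
    using size_less_if_quant_eq[OF real] by simp
  also have "\<dots> \<le> quant_rank (E1 + L + R) eps"
    using assms(2,4) by (intro quant_rank_add_ge) auto
  finally have "int (size {#x \<in># E1 + L + R. x < v#}) < quant_rank (E1 + L + R) eps" .
  with real show ?thesis
    by (simp only: quant_ge_if_size_less)
next
  case PInf
  moreover obtain y where "y \<in># R"
    using assms(3,4) by fastforce
  ultimately show ?thesis
    using assms(6) by auto
qed simp

end
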